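(* Let $W(\omega_1)$ be the space of all countable ordinals with the order topology. If $Y$ is an infinite Tychonoff space of countable weight that is a continuous image of $W(\omega_1)$, then $Y$ is not homogeneous.
   Context: A space $Y$ is homogeneous if for any $y,z\in Y$ there is a homeomorphism of $Y$ onto itself mapping $y$ to $z$. *)

theory Defs
  imports "HOL-Analysis.Analysis"
begin

definition homogeneous_space :: "'a topology \<Rightarrow> bool" where
  "homogeneous_space Y \<longleftrightarrow>
     (\<forall>y\<in>topspace Y. \<forall>z\<in>topspace Y. \<exists>h. homeomorphic_map Y Y h \<and> h y = z)"

definition tychonoff_space :: "'a topology \<Rightarrow> bool" where
  "tychonoff_space Y \<longleftrightarrow> completely_regular_space Y \<and> t1_space Y"

end

theory Submission
  imports Defs
begin

text \<open>A continuous map f from \<open>\<omega>\<^sub>1\<close> into a regular T1 space Y of countable weight is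
  eventually constant. First, some point y is approached cofinally: otherwise each point lies in a
  basic open set that f avoids from some ordinal on, and the countably many such ordinals are
  bounded. Second, f eventually stays in every neighbourhood W of y: otherwise, for a closed
  neighbourhood V \<subseteq> W of y, the ordinals mapped into V and those mapped outside W would form
  two disjoint closed unbounded sets, but any two closed unbounded subsets of \<open>\<omega>\<^sub>1\<close> meet.
  Hence Y is the image of a compact countable segment [0, \<beta>], so Y is compact and countable.
  Being infinite and compact, Y has a non-isolated point; being countable and compact Hausdorff, it
  has an isolated point by the Baire category theorem. No homeomorphism maps the one to the other.\<close>

lemma countable_set_bounded_above:
  fixes S :: "'a::linorder set"
  assumes "uncountable (UNIV :: 'a set)" and "\<And>x::'a. countable {..<x}" and "countable S"
  shows "\<exists>b. \<forall>x\<in>S. x < b"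
proof -
  have "countable (S \<union> (\<Union>x\<in>S. {..<x}))"
    using assms(2,3) by blast
  then obtain b where "b \<notin> S \<union> (\<Union>x\<in>S. {..<x})"
    using assms(1) by (metis UNIV_eq_I)
  then show ?thesis
    by (auto simp: not_less order.order_iff_strict)
qed

lemma incseq_tendsto_Least_upper_bound:
  fixes g :: "nat \<Rightarrow> 'a::{wellorder,linorder_topology}"
  assumes "incseq g" and "\<forall>n. g n \<le> b"
  shows "g \<longlonglongrightarrow> (LEAST s. \<forall>n. g n \<le> s)"
proof (rule order_tendstoI)
  let ?s = "LEAST s. \<forall>n. g n \<le> s"
  have upper: "g n \<le> ?s" for n
    using LeastI[of "\<lambda>s. \<forall>n. g n \<le> s" b] assms(2) by blast
  fix a
  show "eventually (\<lambda>n. g n < a) sequentially" if "?s < a"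
    using upper that by (auto intro: always_eventually le_less_trans)
  assume "a < ?s"
  then obtain m where "a < g m"
    using Least_le[of "\<lambda>s. \<forall>n. g n \<le> s" a] by (metis not_le)
  then show "eventually (\<lambda>n. a < g n) sequentially"
    using assms(1) by (auto simp: eventually_sequentially incseq_def intro: less_le_trans)
qed

lemma closed_unbounded_sets_intersect:
  fixes C D :: "'a::{wellorder,linorder_topology} set"
  assumes countable_bounded: "\<And>S::'a set. countable S \<Longrightarrow> \<exists>b. \<forall>x\<in>S. x < b"
    and "closed C" "closed D"
    and "\<And>x. \<exists>y\<in>C. x < y" "\<And>x. \<exists>y\<in>D. x < y"
  shows "C \<inter> D \<noteq> {}"
proof -
  define P where "P n = (if even n then C else D)" for n :: nat
  have "\<exists>g. \<forall>n. g n \<in> P n \<and> g n < g (Suc n)"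
  proof (rule dependent_nat_choice)
    show "\<exists>x. x \<in> P 0"
      using assms(4) by (auto simp: P_def)
    show "\<exists>y. y \<in> P (Suc n) \<and> x < y" for x n
      using assms(4,5)[of x] by (auto simp: P_def)
  qed
  then obtain g where gP: "\<And>n. g n \<in> P n" and "strict_mono g"
    by (auto simp: strict_mono_Suc_iff)
  then have "incseq g"
    by (simp add: strict_mono_mono)
  obtain b where "\<forall>n. g n \<le> b"
    using countable_bounded[of "range g"] by (auto intro: less_imp_le)
  then have lim: "g \<longlonglongrightarrow> (LEAST s. \<forall>n. g n \<le> s)" (is "_ \<longlonglongrightarrow> ?s")
    by (rule incseq_tendsto_Least_upper_bound[OF \<open>incseq g\<close>])
  have evens: "g (2 * n) \<in> C" and odds: "g (2 * n + 1) \<in> D" for n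
    using gP[of "2 * n"] gP[of "2 * n + 1"] by (simp_all add: P_def)
  have "?s \<in> C"
  proof (rule Lim_in_closed_set[OF \<open>closed C\<close> _ _ LIMSEQ_subseq_LIMSEQ[OF lim]])
    show "strict_mono (\<lambda>n::nat. 2 * n)"
      by (simp add: strict_mono_def)
    show "\<forall>\<^sub>F n in sequentially. (g \<circ> (\<lambda>n. 2 * n)) n \<in> C"
      using evens by simp
  qed simp
  moreover have "?s \<in> D"
  proof (rule Lim_in_closed_set[OF \<open>closed D\<close> _ _ LIMSEQ_subseq_LIMSEQ[OF lim]])
    show "strict_mono (\<lambda>n::nat. 2 * n + 1)"
      by (simp add: strict_mono_def)
    show "\<forall>\<^sub>F n in sequentially. (g \<circ> (\<lambda>n. 2 * n + 1)) n \<in> D"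
      using odds by simp
  qed simp
  ultimately show ?thesis
    by blast
qed

lemma compact_atMost_wellorder:
  fixes g :: "'a::{wellorder,linorder_topology}"
  shows "compact {..g}"
proof (rule compactI)
  fix \<C> assume "\<forall>U\<in>\<C>. open U" and cover: "{..g} \<subseteq> \<Union>\<C>"
  have "\<exists>\<D>\<subseteq>\<C>. finite \<D> \<and> {..x} \<subseteq> \<Union>\<D>" if "x \<le> g" for x
    using that
  proof (induction x rule: less_induct)
    case (less x)
    then obtain U where U: "U \<in> \<C>" "x \<in> U"
      using cover by auto
    show ?case
    proof (cases "\<exists>y. y < x")
      case True
      then obtain c where c: "c < x" "{c<..x} \<subseteq> U"
        using open_left[of U x] U \<open>\<forall>U\<in>\<C>. open U\<close> by blast
      have "c \<le> g"
        using c(1) less.prems by simp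
      then obtain \<D> where \<D>: "\<D> \<subseteq> \<C>" "finite \<D>" "{..c} \<subseteq> \<Union>\<D>"
        using less.IH[OF c(1)] by blast
      have "{..x} \<subseteq> {..c} \<union> {c<..x}"
        by auto
      with \<D> c(2) U(1) show ?thesis
        by (intro exI[of _ "insert U \<D>"]) auto
    next
      case False
      then have "{..x} = {x}"
        by (auto simp: not_less antisym)
      with U show ?thesis
        by (intro exI[of _ "{U}"]) auto
    qed
  qed
  then show "\<exists>\<C>'\<subseteq>\<C>. finite \<C>' \<and> {..g} \<subseteq> \<Union>\<C>'"
    by blast
qed

lemma exists_cofinal_cluster_point:
  fixes f :: "'a::linorder \<Rightarrow> 'b"
  assumes countable_bounded: "\<And>S::'a set. countable S \<Longrightarrow> \<exists>b. \<forall>x\<in>S. x < b"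
    and "second_countable Y" and f_in: "\<And>x. f x \<in> topspace Y"
  shows "\<exists>y\<in>topspace Y. \<forall>V x. openin Y V \<and> y \<in> V \<longrightarrow> (\<exists>z>x. f z \<in> V)"
proof (rule ccontr)
  obtain \<B> where "countable \<B>"
    and base: "\<And>U y. openin Y U \<Longrightarrow> y \<in> U \<Longrightarrow> \<exists>B\<in>\<B>. y \<in> B \<and> B \<subseteq> U"
    using \<open>second_countable Y\<close> unfolding second_countable_def by metis
  define \<B>' where "\<B>' = {B\<in>\<B>. \<exists>x. \<forall>z>x. f z \<notin> B}"
  assume no_cluster: "\<not> ?thesis"
  have "topspace Y \<subseteq> \<Union>\<B>'"
  proof
    fix y assume "y \<in> topspace Y"
    with no_cluster obtain V x where "openin Y V" "y \<in> V" "\<forall>z>x. f z \<notin> V"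
      by auto
    with base[of V y] show "y \<in> \<Union>\<B>'"
      unfolding \<B>'_def by blast
  qed
  have "\<forall>B\<in>\<B>'. \<exists>x. \<forall>z>x. f z \<notin> B"
    by (simp add: \<B>'_def)
  then obtain bd where bd: "\<And>B z. B \<in> \<B>' \<Longrightarrow> bd B < z \<Longrightarrow> f z \<notin> B"
    by metis
  have "countable (bd ` \<B>')"
    using \<open>countable \<B>\<close> by (simp add: \<B>'_def)
  then obtain b where "\<forall>B\<in>\<B>'. bd B < b"
    using countable_bounded by (metis imageI)
  moreover obtain B where "B \<in> \<B>'" "f b \<in> B"
    using \<open>topspace Y \<subseteq> \<Union>\<B>'\<close> f_in[of b] by blast
  ultimately show False
    using bd by blast
qed

lemma eventually_in_neighbourhood_of_cofinal_cluster_point: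
  fixes f :: "'a::{wellorder,linorder_topology} \<Rightarrow> 'b"
  assumes countable_bounded: "\<And>S::'a set. countable S \<Longrightarrow> \<exists>b. \<forall>x\<in>S. x < b"
    and "regular_space Y" and f: "continuous_map euclidean Y f"
    and cluster: "\<And>V x. openin Y V \<Longrightarrow> y \<in> V \<Longrightarrow> \<exists>z>x. f z \<in> V"
    and W: "openin Y W" "y \<in> W"
  shows "\<exists>\<alpha>. \<forall>z>\<alpha>. f z \<in> W"
proof (rule ccontr)
  assume escapes: "\<nexists>\<alpha>. \<forall>z>\<alpha>. f z \<in> W"
  obtain U V where "openin Y U" "closedin Y V" "y \<in> U" "U \<subseteq> V" "V \<subseteq> W"
    using \<open>regular_space Y\<close> W
    unfolding neighbourhood_base_of_closedin[symmetric] neighbourhood_base_of by meson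
  have "{x. f x \<in> V} \<inter> {x. f x \<in> topspace Y - W} \<noteq> {}"
  proof (rule closed_unbounded_sets_intersect[OF countable_bounded])
    show "closed {x. f x \<in> V}"
      using closedin_continuous_map_preimage[OF f \<open>closedin Y V\<close>] by simp
    show "closed {x. f x \<in> topspace Y - W}"
      using closedin_continuous_map_preimage[OF f closedin_diff[OF closedin_topspace W(1)]] by simp
    show "\<exists>z\<in>{x. f x \<in> V}. x < z" for x
      using cluster[OF \<open>openin Y U\<close> \<open>y \<in> U\<close>, of x] \<open>U \<subseteq> V\<close> by blast
    show "\<exists>z\<in>{x. f x \<in> topspace Y - W}. x < z" for x
    proof -
      obtain z where "x < z" "f z \<notin> W"
        using escapes by blast
      then show ?thesis
        using continuous_map_image_subset_topspace[OF f] by auto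
    qed
  qed
  with \<open>V \<subseteq> W\<close> show False
    by blast
qed

lemma continuous_map_eventually_constant:
  fixes f :: "'a::{wellorder,linorder_topology} \<Rightarrow> 'b"
  assumes countable_bounded: "\<And>S::'a set. countable S \<Longrightarrow> \<exists>b. \<forall>x\<in>S. x < b"
    and "regular_space Y" "t1_space Y" "second_countable Y"
    and f: "continuous_map euclidean Y f"
  shows "\<exists>\<beta>. \<forall>x\<ge>\<beta>. f x = f \<beta>"
proof -
  have f_in: "f x \<in> topspace Y" for x
    using continuous_map_image_subset_topspace[OF f] by auto
  obtain y where "y \<in> topspace Y"
    and cluster: "\<And>V x. openin Y V \<Longrightarrow> y \<in> V \<Longrightarrow> \<exists>z>x. f z \<in> V"
    using exists_cofinal_cluster_point[where f = f and Y = Y,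
        OF countable_bounded \<open>second_countable Y\<close> f_in]
    by meson
  obtain \<B> where "countable \<B>" and "\<forall>B\<in>\<B>. openin Y B"
    and base: "\<And>U y. openin Y U \<Longrightarrow> y \<in> U \<Longrightarrow> \<exists>B\<in>\<B>. y \<in> B \<and> B \<subseteq> U"
    using \<open>second_countable Y\<close> unfolding second_countable_def by metis
  define \<B>\<^sub>y where "\<B>\<^sub>y = {B\<in>\<B>. y \<in> B}"
  have "\<forall>B\<in>\<B>\<^sub>y. \<exists>\<alpha>. \<forall>z>\<alpha>. f z \<in> B"
    using eventually_in_neighbourhood_of_cofinal_cluster_point[where f = f and Y = Y,
        OF countable_bounded \<open>regular_space Y\<close> f cluster] \<open>\<forall>B\<in>\<B>. openin Y B\<close>
    by (auto simp: \<B>\<^sub>y_def)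
  then obtain tail where tail: "\<And>B z. B \<in> \<B>\<^sub>y \<Longrightarrow> tail B < z \<Longrightarrow> f z \<in> B"
    by metis
  have "countable (tail ` \<B>\<^sub>y)"
    using \<open>countable \<B>\<close> by (simp add: \<B>\<^sub>y_def)
  then obtain \<beta>\<^sub>0 where \<beta>\<^sub>0: "\<forall>B\<in>\<B>\<^sub>y. tail B < \<beta>\<^sub>0"
    using countable_bounded by (metis imageI)
  have const: "f x = y" if "\<beta>\<^sub>0 < x" for x
  proof (rule ccontr)
    assume "f x \<noteq> y"
    then obtain U where "openin Y U" "y \<in> U" "f x \<notin> U"
      using \<open>t1_space Y\<close> \<open>y \<in> topspace Y\<close> f_in[of x] unfolding t1_space_def by metis
    then obtain B where "B \<in> \<B>\<^sub>y" "B \<subseteq> U"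
      using base unfolding \<B>\<^sub>y_def by blast
    with tail[of B x] \<beta>\<^sub>0 that \<open>f x \<notin> U\<close> show False
      by (meson less_trans subsetD)
  qed
  obtain \<beta> where "\<beta>\<^sub>0 < \<beta>"
    using countable_bounded[of "{\<beta>\<^sub>0}"] by auto
  then show ?thesis
    using const by (metis less_le_trans)
qed

lemma compact_space_infinite_imp_non_isolated_point:
  assumes "compact_space Y" and "infinite (topspace Y)"
  shows "\<exists>z\<in>topspace Y. \<not> openin Y {z}"
  using assms compact_space_discrete_topology discrete_topology_unique by metis

lemma countable_compact_space_has_isolated_point:
  assumes "compact_space Y" "regular_space Y" "t1_space Y"
    and "countable (topspace Y)" and "topspace Y \<noteq> {}"
  shows "\<exists>y\<in>topspace Y. openin Y {y}"
proof (rule ccontr)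
  assume no_isolated: "\<not> ?thesis"
  \<comment> \<open>The complements of the countably many points are then dense open sets with empty
      intersection.\<close>
  let ?\<G> = "(\<lambda>y. topspace Y - {y}) ` topspace Y"
  have "Y closure_of \<Inter>?\<G> = topspace Y"
  proof (rule Baire_category)
    show "completely_metrizable_space Y \<or> locally_compact_space Y \<and> regular_space Y"
      using assms compact_imp_locally_compact_space by blast
    show "countable ?\<G>"
      using \<open>countable (topspace Y)\<close> by simp
    fix T assume "T \<in> ?\<G>"
    then obtain y where y: "y \<in> topspace Y" "T = topspace Y - {y}"
      by blast
    have "Y interior_of {y} = {}"
      using no_isolated y(1) interior_of_subset[of Y "{y}"] interior_of_eq[of Y "{y}"]
      by (metis subset_singletonD)
    then show "openin Y T \<and> Y closure_of T = topspace Y"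
      using y \<open>t1_space Y\<close>
      by (simp add: closure_of_complement openin_diff t1_space_closedin_singleton)
  qed
  moreover have "\<Inter>?\<G> = {}"
    using \<open>topspace Y \<noteq> {}\<close> by auto
  ultimately show False
    using \<open>topspace Y \<noteq> {}\<close> by (metis closure_of_empty)
qed

lemma homogeneous_space_all_points_isolated:
  assumes "homogeneous_space Y" and "openin Y {y}" and "z \<in> topspace Y"
  shows "openin Y {z}"
proof -
  have "y \<in> topspace Y"
    using openin_subset[OF \<open>openin Y {y}\<close>] by simp
  then obtain h where "homeomorphic_map Y Y h" "h y = z"
    using assms unfolding homogeneous_space_def by blast
  then show ?thesis
    using homeomorphic_map_openness[of Y Y h "{y}"] \<open>openin Y {y}\<close> \<open>y \<in> topspace Y\<close> by simp
qed

theorem mainTheorem3: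
  fixes Y :: "'b topology"
  assumes omega1_uncountable: "uncountable (UNIV :: ('a::{wellorder, linorder_topology}) set)"
      and omega1_segments: "\<And>x::'a. countable {..<x}"
      and infinite_Y: "infinite (topspace Y)"
      and tych: "tychonoff_space Y"
      and weight: "second_countable Y"
      and image: "\<exists>f. continuous_map (euclidean :: 'a topology) Y f \<and> f ` UNIV = topspace Y"
  shows "\<not> homogeneous_space Y"
proof
  assume "homogeneous_space Y"
  obtain f where f: "continuous_map (euclidean :: 'a topology) Y f" and onto: "f ` UNIV = topspace Y"
    using image by blast
  have "regular_space Y" "t1_space Y"
    using tych completely_regular_imp_regular_space unfolding tychonoff_space_def by auto
  obtain \<beta> where const: "\<forall>x\<ge>\<beta>. f x = f \<beta>"
    using continuous_map_eventually_constant[where f = f and Y = Y,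
        OF countable_set_bounded_above[OF omega1_uncountable omega1_segments]
        \<open>regular_space Y\<close> \<open>t1_space Y\<close> weight f]
    by blast
  have "f x \<in> f ` {..\<beta>}" for x
    using const by (metis atMost_iff image_eqI nle_le order_refl)
  then have Y_eq: "topspace Y = f ` {..\<beta>}"
    using onto by (metis image_mono subset_UNIV subset_antisym image_subsetI)
  have "countable (topspace Y)"
    using omega1_segments[of \<beta>] unfolding Y_eq ivl_disj_un_singleton(2)[symmetric] by simp
  have "compact_space Y"
    unfolding compact_space_def Y_eq
    using image_compactin[OF _ f] compact_atMost_wellorder[of \<beta>] by simp
  obtain z where "z \<in> topspace Y" "\<not> openin Y {z}"
    using compact_space_infinite_imp_non_isolated_point[OF \<open>compact_space Y\<close> infinite_Y] by blast
  moreover obtain y where "openin Y {y}"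
    using countable_compact_space_has_isolated_point[OF \<open>compact_space Y\<close> \<open>regular_space Y\<close>
        \<open>t1_space Y\<close> \<open>countable (topspace Y)\<close>] \<open>z \<in> topspace Y\<close> by blast
  ultimately show False
    using homogeneous_space_all_points_isolated[OF \<open>homogeneous_space Y\<close>] by blast
qed

end
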